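(* Let $d,n\ge2$ and $\gamma=[1^{(0)}\;2^{(0)}\;\ldots\;(n-1)^{(0)}][n^{(0)}]_{d-1}\in G(d,d,n)$. For $1<a\le n$ and $s\in[d-1]$, we have $[1^{(0)}]_s[a^{(0)}]_{d-s}\le_T\gamma$ if and only if $a=n$ and $s=1$.
   Context: $G(d,d,n)$ is the group of $n\times n$ monomial matrices with $d$-th roots of unity as nonzero entries whose product is $1$, viewed as permutations of colored integers $k^{(s)}=\zeta^se_k$ ($\zeta=e^{2\pi i/d}$, $k\in[n]$, $s\in\mathbb{Z}/d$); products composed right to left. For $s\in[d-1]$ the balanced cycle $[k_1^{(t_1)}\ldots k_r^{(t_r)}]_s$ is the cycle $(k_1^{(t_1)}\ldots k_r^{(t_r)}\,k_1^{(t_1+s)}\ldots k_r^{(t_r+s)}\ldots k_1^{(t_1+(d-1)s)}\ldots k_r^{(t_r+(d-1)s)})$; subscript $1$ omitted. With $T$ the reflections, $\ell_T$ is absolute length (minimal number of reflection factors) and $u\le_Tv$ iff $\ell_T(v)=\ell_T(u)+\ell_T(u^{-1}v)$. *)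

theory Defs
  imports Complex_Main "HOL-Combinatorics.Permutations"
begin

text \<open>Colored integers k^(s) are pairs (k, s) with k in {1..n}, s in {0..<d}.
  Elements of G(d,d,n) are bijections of nat x nat acting on the colored integers
  (and as identity outside them). Products compose right to left: u v = u o v.\<close>

definition colored :: "nat \<Rightarrow> nat \<Rightarrow> (nat \<times> nat) set" where
  "colored d n = {1..n} \<times> {0..<d}"

definition Gddn :: "nat \<Rightarrow> nat \<Rightarrow> (nat \<times> nat \<Rightarrow> nat \<times> nat) set" where
  "Gddn d n = {f. \<exists>\<sigma> c. \<sigma> permutes {1..n} \<and> (\<forall>k. c k < d) \<and>
      (\<Sum>k\<in>{1..n}. c k) mod d = 0 \<and>
      (\<forall>k s. f (k, s) = (if k \<in> {1..n} \<and> s < d then (\<sigma> k, (s + c k) mod d) else (k, s)))}"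

text \<open>Monomial matrix of f acting on C^n (vectors indexed by {1..n}):
  f e_k = zeta^(c k) e_(sigma k), where f (k,0) = (sigma k, c k).\<close>

definition zeta :: "nat \<Rightarrow> complex" where
  "zeta d = exp (2 * of_real pi * \<i> / of_nat d)"

definition mat_act :: "nat \<Rightarrow> nat \<Rightarrow> (nat \<times> nat \<Rightarrow> nat \<times> nat) \<Rightarrow> (nat \<Rightarrow> complex) \<Rightarrow> (nat \<Rightarrow> complex)" where
  "mat_act d n f v = (\<lambda>j. \<Sum>k\<in>{1..n}. if fst (f (k, 0)) = j then zeta d ^ snd (f (k, 0)) * v k else 0)"

definition is_reflection :: "nat \<Rightarrow> nat \<Rightarrow> (nat \<times> nat \<Rightarrow> nat \<times> nat) \<Rightarrow> bool" where
  "is_reflection d n f \<longleftrightarrow> f \<noteq> id \<and>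
     (\<exists>\<alpha> :: nat \<Rightarrow> complex. (\<exists>k\<in>{1..n}. \<alpha> k \<noteq> 0) \<and>
        (\<forall>v. (\<Sum>k\<in>{1..n}. \<alpha> k * v k) = 0 \<longrightarrow> (\<forall>j\<in>{1..n}. mat_act d n f v j = v j)))"

definition reflections :: "nat \<Rightarrow> nat \<Rightarrow> (nat \<times> nat \<Rightarrow> nat \<times> nat) set" where
  "reflections d n = {r \<in> Gddn d n. is_reflection d n r}"

definition abs_len :: "nat \<Rightarrow> nat \<Rightarrow> (nat \<times> nat \<Rightarrow> nat \<times> nat) \<Rightarrow> nat" where
  "abs_len d n w = (LEAST k. \<exists>rs. length rs = k \<and> set rs \<subseteq> reflections d n \<and> w = foldr (\<circ>) rs id)"

definition abs_le :: "nat \<Rightarrow> nat \<Rightarrow> (nat \<times> nat \<Rightarrow> nat \<times> nat) \<Rightarrow> (nat \<times> nat \<Rightarrow> nat \<times> nat) \<Rightarrow> bool" where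
  "abs_le d n u v \<longleftrightarrow> abs_len d n v = abs_len d n u + abs_len d n (inv u \<circ> v)"

text \<open>Balanced cycle [k_1^(t_1) ... k_r^(t_r)]_s given as list [(k_1,t_1),...,(k_r,t_r)]:
  k_i^(t) maps to k_(i+1)^(t + t_(i+1) - t_i), and k_r^(t) maps to k_1^(t + s + t_1 - t_r)
  (colors mod d); identity elsewhere.\<close>

definition bcyc :: "nat \<Rightarrow> nat \<Rightarrow> (nat \<times> nat) list \<Rightarrow> (nat \<times> nat \<Rightarrow> nat \<times> nat)" where
  "bcyc d s ks = (\<lambda>(k, t).
     if t < d \<and> (\<exists>i<length ks. fst (ks ! i) = k) then
       (let i = (LEAST i. i < length ks \<and> fst (ks ! i) = k);
            j = Suc i mod length ks;
            sh = (if Suc i = length ks then int s else 0)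
        in (fst (ks ! j), nat ((int t + sh + int (snd (ks ! j)) - int (snd (ks ! i))) mod int d)))
     else (k, t))"

end

theory Submission
  imports Defs "HOL-Analysis.Complex_Transcendental" "HOL-Combinatorics.Cycles"
begin

text \<open>
  Every element of G(d,d,n) acts as a monomial map k^(t) \<mapsto> \<sigma>(k)^(t + c(k)), and its matrix fixes
  a vector v iff the function k^(t) \<mapsto> \<zeta>^(-t) v(k) on coloured integers is invariant under it.
  Fewer than n reflections fix a common zero of their fewer than n hyperplane forms, so an element
  without nonzero fixed vector has absolute length at least n.

  Let u(a,s) = [1]_s [a]_(d-s), a product of two reflections, and c = [1 2 ... n-1], a product of
  n - 2 transpositions. Then \<gamma> = u(n,1) c, and u(a,s)\<inverse> \<gamma> is a diagonal element times c. Such an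
  element has a nonzero fixed vector only if the colours along the cycle (1 ... n-1) or the colour
  at n sum to 0 modulo d. For \<gamma> these sums are 1 and -1, so l_T(\<gamma>) = n. For (a,s) \<noteq> (n,1) neither
  sum vanishes for u\<inverse> \<gamma>, so l_T(u) + l_T(u\<inverse> \<gamma>) \<ge> 1 + n; for (a,s) = (n,1) we have u\<inverse> \<gamma> = c
  and l_T(u) + l_T(c) \<le> n.
\<close>

section \<open>Monomial elements\<close>

lemma zeta_nonzero [simp]: "zeta d \<noteq> 0"
  by (simp add: zeta_def)

lemma zeta_pow: "zeta d ^ m = exp (2 * of_real pi * \<i> * of_nat m / of_nat d)"
  unfolding zeta_def by (simp add: exp_of_nat_mult [symmetric] mult_ac)

lemma zeta_pow_eq_1_iff: "0 < d \<Longrightarrow> zeta d ^ m = 1 \<longleftrightarrow> d dvd m"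
  unfolding zeta_pow by (rule complex_root_unity_eq_1) simp

lemma zeta_pow_mod:
  assumes "0 < d"
  shows "zeta d ^ (m mod d) = zeta d ^ m"
proof -
  have "zeta d ^ m = zeta d ^ (d * (m div d) + m mod d)"
    by simp
  also have "\<dots> = (zeta d ^ d) ^ (m div d) * zeta d ^ (m mod d)"
    by (simp only: power_add power_mult)
  finally show ?thesis
    using zeta_pow_eq_1_iff [OF assms, of d] by simp
qed

text \<open>The matrix of \<open>monomial d n \<sigma> c\<close> is e_k \<mapsto> \<zeta>^(c k) e_(\<sigma> k); colours matter only modulo d.\<close>

definition monomial :: "nat \<Rightarrow> nat \<Rightarrow> (nat \<Rightarrow> nat) \<Rightarrow> (nat \<Rightarrow> nat) \<Rightarrow> nat \<times> nat \<Rightarrow> nat \<times> nat" where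
  "monomial d n \<sigma> c = (\<lambda>(k, t). if k \<in> {1..n} \<and> t < d then (\<sigma> k, (t + c k) mod d) else (k, t))"

lemma Gddn_monomialE:
  assumes "f \<in> Gddn d n"
  obtains \<sigma> c where "\<sigma> permutes {1..n}" and "f = monomial d n \<sigma> c"
proof -
  obtain \<sigma> c where \<sigma>: "\<sigma> permutes {1..n}" and f:
      "\<forall>k s. f (k, s) = (if k \<in> {1..n} \<and> s < d then (\<sigma> k, (s + c k) mod d) else (k, s))"
    using assms unfolding Gddn_def by blast
  have "f = monomial d n \<sigma> c"
    by (rule ext, clarify) (simp add: f monomial_def)
  with \<sigma> show ?thesis by (rule that)
qed

lemma monomial_in_Gddn:
  assumes "0 < d" and "\<sigma> permutes {1..n}" and "(\<Sum>k\<in>{1..n}. c k) mod d = 0"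
  shows "monomial d n \<sigma> c \<in> Gddn d n"
  unfolding Gddn_def mem_Collect_eq
proof (intro exI conjI)
  show "(\<Sum>k\<in>{1..n}. c k mod d) mod d = 0"
    using assms(3) by (simp add: mod_sum_eq)
  show "\<forall>k. c k mod d < d"
    using assms(1) by simp
  show "\<forall>k s. monomial d n \<sigma> c (k, s) =
      (if k \<in> {1..n} \<and> s < d then (\<sigma> k, (s + c k mod d) mod d) else (k, s))"
    by (simp add: monomial_def mod_add_right_eq)
qed (fact assms(2))

lemma monomial_cong:
  assumes "\<And>k. k \<in> {1..n} \<Longrightarrow> \<sigma> k = \<sigma>' k" and "\<And>k. k \<in> {1..n} \<Longrightarrow> c k mod d = c' k mod d"
  shows "monomial d n \<sigma> c = monomial d n \<sigma>' c'"
proof (rule ext, clarify)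
  fix k t
  show "monomial d n \<sigma> c (k, t) = monomial d n \<sigma>' c' (k, t)"
  proof (cases "k \<in> {1..n} \<and> t < d")
    case True
    have "(t + c k) mod d = (t + c k mod d) mod d"
      by (simp add: mod_add_right_eq)
    also have "\<dots> = (t + c' k) mod d"
      using assms(2) True by (simp add: mod_add_right_eq)
    finally show ?thesis
      using assms(1) True by (simp add: monomial_def)
  qed (auto simp: monomial_def)
qed

lemma monomial_id_zero [simp]: "monomial d n id (\<lambda>_. 0) = id"
  by (auto simp: monomial_def fun_eq_iff)

lemma monomial_comp:
  assumes "\<tau> permutes {1..n}"
  shows "monomial d n \<sigma> c \<circ> monomial d n \<tau> e = monomial d n (\<sigma> \<circ> \<tau>) (\<lambda>k. e k + c (\<tau> k))"
proof (rule ext, clarify)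
  fix k t
  show "(monomial d n \<sigma> c \<circ> monomial d n \<tau> e) (k, t) = monomial d n (\<sigma> \<circ> \<tau>) (\<lambda>k. e k + c (\<tau> k)) (k, t)"
  proof (cases "k \<in> {1..n} \<and> t < d")
    case True
    then have "\<tau> k \<in> {1..n}" and "(t + e k) mod d < d"
      using permutes_in_image [OF assms] by auto
    with True show ?thesis
      by (simp add: monomial_def mod_add_left_eq add.assoc)
  next
    case False
    then have "monomial d n g h (k, t) = (k, t)" for g h
      by (auto simp: monomial_def)
    then show ?thesis by simp
  qed
qed

lemma mat_act_monomial:
  assumes "0 < d" and "\<sigma> permutes {1..n}" and "k \<in> {1..n}"
  shows "mat_act d n (monomial d n \<sigma> c) v (\<sigma> k) = zeta d ^ c k * v k"
proof -
  have "mat_act d n (monomial d n \<sigma> c) v (\<sigma> k) =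
      (\<Sum>k'\<in>{1..n}. if k' = k then zeta d ^ (c k mod d) * v k else 0)"
    unfolding mat_act_def
  proof (rule sum.cong [OF refl])
    fix k' assume "k' \<in> {1..n}"
    then show "(if fst (monomial d n \<sigma> c (k', 0)) = \<sigma> k
          then zeta d ^ snd (monomial d n \<sigma> c (k', 0)) * v k' else 0) =
        (if k' = k then zeta d ^ (c k mod d) * v k else 0)"
      using assms permutes_inj [OF assms(2)] by (auto simp: monomial_def inj_eq)
  qed
  also have "\<dots> = zeta d ^ c k * v k"
    using assms by (simp add: zeta_pow_mod)
  finally show ?thesis .
qed

lemma mat_act_monomial_fixes_iff:
  assumes "0 < d" and "\<sigma> permutes {1..n}"
  shows "(\<forall>j\<in>{1..n}. mat_act d n (monomial d n \<sigma> c) v j = v j) \<longleftrightarrow>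
    (\<forall>k\<in>{1..n}. v (\<sigma> k) = zeta d ^ c k * v k)"
proof -
  have ball_perm: "(\<forall>j\<in>{1..n}. P j) \<longleftrightarrow> (\<forall>k\<in>{1..n}. P (\<sigma> k))" for P
  proof -
    have "(\<forall>j\<in>{1..n}. P j) \<longleftrightarrow> (\<forall>j\<in>\<sigma> ` {1..n}. P j)"
      by (simp only: permutes_image [OF assms(2)])
    then show ?thesis by simp
  qed
  show ?thesis
    using ball_perm [of "\<lambda>j. mat_act d n (monomial d n \<sigma> c) v j = v j"] mat_act_monomial [OF assms]
    by auto
qed

text \<open>
  Comparing \<open>mat_act_monomial_fixes_iff\<close> with \<open>lift_invariant_monomial_iff\<close>: the matrix of a
  monomial element fixes \<open>v\<close> iff it leaves \<open>coloured_lift d v\<close> invariant. Unlike the matrix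
  action, invariance is evidently preserved under composition.
\<close>

definition coloured_lift :: "nat \<Rightarrow> (nat \<Rightarrow> complex) \<Rightarrow> nat \<times> nat \<Rightarrow> complex" where
  "coloured_lift d v = (\<lambda>(k, t). v k / zeta d ^ t)"

lemma lift_invariant_monomial_iff:
  assumes "0 < d"
  shows "coloured_lift d v \<circ> monomial d n \<sigma> c = coloured_lift d v \<longleftrightarrow>
    (\<forall>k\<in>{1..n}. v (\<sigma> k) = zeta d ^ c k * v k)"
proof
  assume inv: "coloured_lift d v \<circ> monomial d n \<sigma> c = coloured_lift d v"
  show "\<forall>k\<in>{1..n}. v (\<sigma> k) = zeta d ^ c k * v k"
  proof
    fix k assume "k \<in> {1..n}"
    moreover have "coloured_lift d v (monomial d n \<sigma> c (k, 0)) = coloured_lift d v (k, 0)"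
      using inv by (metis comp_apply)
    ultimately show "v (\<sigma> k) = zeta d ^ c k * v k"
      using assms by (simp add: coloured_lift_def monomial_def zeta_pow_mod field_simps)
  qed
next
  assume fixed: "\<forall>k\<in>{1..n}. v (\<sigma> k) = zeta d ^ c k * v k"
  show "coloured_lift d v \<circ> monomial d n \<sigma> c = coloured_lift d v"
  proof (rule ext, clarify)
    fix k t
    show "(coloured_lift d v \<circ> monomial d n \<sigma> c) (k, t) = coloured_lift d v (k, t)"
      using fixed assms by (auto simp: coloured_lift_def monomial_def zeta_pow_mod power_add)
  qed
qed

lemma comp_foldr_invariant: "(\<And>r. r \<in> set rs \<Longrightarrow> L \<circ> r = L) \<Longrightarrow> L \<circ> foldr (\<circ>) rs id = L"
  by (induction rs) (simp_all add: o_assoc)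

lemma reflection_fixes_hyperplane:
  assumes "0 < d" and "r \<in> reflections d n"
  shows "\<exists>\<alpha>. \<forall>v. (\<Sum>k\<in>{1..n}. \<alpha> k * v k) = 0 \<longrightarrow> coloured_lift d v \<circ> r = coloured_lift d v"
proof -
  obtain \<alpha> where kernel_fixed: "\<forall>v. (\<Sum>k\<in>{1..n}. \<alpha> k * v k) = 0 \<longrightarrow> (\<forall>j\<in>{1..n}. mat_act d n r v j = v j)"
    using assms(2) unfolding reflections_def is_reflection_def by blast
  obtain \<sigma> c where \<sigma>: "\<sigma> permutes {1..n}" and r: "r = monomial d n \<sigma> c"
    using assms(2) unfolding reflections_def by (blast elim: Gddn_monomialE)
  show ?thesis
    using kernel_fixed unfolding r mat_act_monomial_fixes_iff [OF assms(1) \<sigma>] lift_invariant_monomial_iff [OF assms(1)]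
    by blast
qed

section \<open>Elements without fixed vectors have absolute length at least n\<close>

lemma pivot_extension:
  fixes \<alpha> \<beta> w :: "'i \<Rightarrow> 'a::field"
  assumes "finite I" and "p \<in> I" and "\<alpha> p \<noteq> 0"
  defines "v \<equiv> w(p := - (\<Sum>k\<in>I - {p}. \<alpha> k * w k) / \<alpha> p)"
  shows "(\<Sum>k\<in>I. \<alpha> k * v k) = 0"
    and "(\<Sum>k\<in>I - {p}. (\<beta> k - \<beta> p / \<alpha> p * \<alpha> k) * w k) = 0 \<Longrightarrow> (\<Sum>k\<in>I. \<beta> k * v k) = 0"
proof -
  have split: "(\<Sum>k\<in>I. \<gamma> k * v k) = \<gamma> p * v p + (\<Sum>k\<in>I - {p}. \<gamma> k * w k)" for \<gamma>
  proof -
    have "(\<Sum>k\<in>I - {p}. \<gamma> k * v k) = (\<Sum>k\<in>I - {p}. \<gamma> k * w k)"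
      by (rule sum.cong) (auto simp: v_def)
    then show ?thesis
      using sum.remove [OF assms(1,2), of "\<lambda>k. \<gamma> k * v k"] by simp
  qed
  show "(\<Sum>k\<in>I. \<alpha> k * v k) = 0"
    using split [of \<alpha>] assms(3) by (simp add: v_def)
  assume "(\<Sum>k\<in>I - {p}. (\<beta> k - \<beta> p / \<alpha> p * \<alpha> k) * w k) = 0"
  then have "(\<Sum>k\<in>I - {p}. \<beta> k * w k) = \<beta> p / \<alpha> p * (\<Sum>k\<in>I - {p}. \<alpha> k * w k)"
    by (simp add: algebra_simps sum_subtractf sum_distrib_left)
  then show "(\<Sum>k\<in>I. \<beta> k * v k) = 0"
    using split [of \<beta>] assms(3) by (simp add: v_def field_simps)
qed

lemma linear_forms_common_zero:
  fixes \<alpha>s :: "('i \<Rightarrow> 'a::field) list"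
  assumes "finite I" and "length \<alpha>s < card I"
  shows "\<exists>v. (\<exists>k\<in>I. v k \<noteq> 0) \<and> (\<forall>\<alpha>\<in>set \<alpha>s. (\<Sum>k\<in>I. \<alpha> k * v k) = 0)"
  using assms
proof (induction \<alpha>s arbitrary: I rule: length_induct)
  case (1 \<alpha>s)
  show ?case
  proof (cases \<alpha>s)
    case Nil
    with "1.prems" have "I \<noteq> {}" by auto
    with Nil show ?thesis by (intro exI [of _ "\<lambda>_. 1"]) auto
  next
    case (Cons \<alpha> rest)
    have IH: "\<exists>v. (\<exists>k\<in>J. v k \<noteq> 0) \<and> (\<forall>\<beta>\<in>set \<beta>s. (\<Sum>k\<in>J. \<beta> k * v k) = 0)"
      if "length \<beta>s < length \<alpha>s" and "finite J" and "length \<beta>s < card J" for \<beta>s :: "('i \<Rightarrow> 'a) list" and J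
      using "1.IH" that by blast
    show ?thesis
    proof (cases "\<forall>k\<in>I. \<alpha> k = 0")
      case True
      obtain v where "\<exists>k\<in>I. v k \<noteq> 0" and "\<forall>\<beta>\<in>set rest. (\<Sum>k\<in>I. \<beta> k * v k) = 0"
        using IH [of rest I] "1.prems" Cons by auto
      with True Cons show ?thesis by auto
    next
      case False
      then obtain p where p: "p \<in> I" "\<alpha> p \<noteq> 0" by auto
      define rest' where "rest' = map (\<lambda>\<beta> k. \<beta> k - \<beta> p / \<alpha> p * \<alpha> k) rest"
      have "length rest' < length \<alpha>s" and "length rest' < card (I - {p})"
        using "1.prems" p Cons by (simp_all add: rest'_def)
      then obtain w where w: "\<exists>k\<in>I - {p}. w k \<noteq> 0" "\<forall>\<beta>\<in>set rest'. (\<Sum>k\<in>I - {p}. \<beta> k * w k) = 0"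
        using IH [of rest' "I - {p}"] "1.prems"(1) by blast
      let ?v = "w(p := - (\<Sum>k\<in>I - {p}. \<alpha> k * w k) / \<alpha> p)"
      have "\<exists>k\<in>I. ?v k \<noteq> 0"
        using w(1) by auto
      moreover have "\<forall>\<beta>\<in>set \<alpha>s. (\<Sum>k\<in>I. \<beta> k * ?v k) = 0"
        using pivot_extension [where I = I and p = p and \<alpha> = \<alpha> and w = w, OF "1.prems"(1) p] w(2) Cons
        by (auto simp: rest'_def)
      ultimately show ?thesis by blast
    qed
  qed
qed

lemma few_reflections_fix_nonzero_lift:
  assumes "0 < d" and "set rs \<subseteq> reflections d n" and "length rs < n"
  shows "\<exists>v. (\<exists>k\<in>{1..n}. v k \<noteq> 0) \<and> coloured_lift d v \<circ> foldr (\<circ>) rs id = coloured_lift d v"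
proof -
  have "\<forall>r\<in>set rs. \<exists>\<alpha>. \<forall>v. (\<Sum>k\<in>{1..n}. \<alpha> k * v k) = 0 \<longrightarrow> coloured_lift d v \<circ> r = coloured_lift d v"
    using reflection_fixes_hyperplane [OF assms(1)] assms(2) by blast
  then obtain \<alpha> where \<alpha>: "\<forall>r\<in>set rs. \<forall>v. (\<Sum>k\<in>{1..n}. \<alpha> r k * v k) = 0 \<longrightarrow>
      coloured_lift d v \<circ> r = coloured_lift d v"
    by (metis bchoice)
  obtain v where "\<exists>k\<in>{1..n}. v k \<noteq> 0" and kernel: "\<forall>r\<in>set rs. (\<Sum>k\<in>{1..n}. \<alpha> r k * v k) = 0"
    using linear_forms_common_zero [of "{1..n}" "map \<alpha> rs"] assms(3) by auto
  moreover have "coloured_lift d v \<circ> foldr (\<circ>) rs id = coloured_lift d v"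
    by (rule comp_foldr_invariant) (use \<alpha> kernel in blast)
  ultimately show ?thesis by blast
qed

definition refl_product :: "nat \<Rightarrow> nat \<Rightarrow> (nat \<times> nat \<Rightarrow> nat \<times> nat) \<Rightarrow> bool" where
  "refl_product d n w \<longleftrightarrow> (\<exists>rs. set rs \<subseteq> reflections d n \<and> w = foldr (\<circ>) rs id)"

lemma abs_len_le: "set rs \<subseteq> reflections d n \<Longrightarrow> w = foldr (\<circ>) rs id \<Longrightarrow> abs_len d n w \<le> length rs"
  unfolding abs_len_def by (rule Least_le) blast

lemma abs_len_obtain:
  assumes "refl_product d n w"
  obtains rs where "length rs = abs_len d n w" and "set rs \<subseteq> reflections d n" and "w = foldr (\<circ>) rs id"
proof -
  have "\<exists>k rs. length rs = k \<and> set rs \<subseteq> reflections d n \<and> w = foldr (\<circ>) rs id"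
    using assms unfolding refl_product_def by blast
  then have "\<exists>rs. length rs = abs_len d n w \<and> set rs \<subseteq> reflections d n \<and> w = foldr (\<circ>) rs id"
    unfolding abs_len_def by (rule LeastI_ex)
  with that show ?thesis by blast
qed

lemma foldr_comp_append: "foldr (\<circ>) (xs @ ys) id = foldr (\<circ>) xs id \<circ> foldr (\<circ>) ys id"
  by (induction xs) (simp_all add: o_assoc)

lemma refl_product_comp:
  assumes "refl_product d n f" and "refl_product d n g"
  shows "refl_product d n (f \<circ> g)"
proof -
  obtain rs qs where "set rs \<subseteq> reflections d n" "f = foldr (\<circ>) rs id"
    and "set qs \<subseteq> reflections d n" "g = foldr (\<circ>) qs id"
    using assms unfolding refl_product_def by blast
  then have "set (rs @ qs) \<subseteq> reflections d n" and "f \<circ> g = foldr (\<circ>) (rs @ qs) id"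
    by (simp_all only: set_append Un_subset_iff foldr_comp_append)
  then show ?thesis
    unfolding refl_product_def by blast
qed

lemma abs_len_comp_le:
  assumes "refl_product d n f" and "refl_product d n g"
  shows "abs_len d n (f \<circ> g) \<le> abs_len d n f + abs_len d n g"
proof -
  obtain rs where rs: "length rs = abs_len d n f" "set rs \<subseteq> reflections d n" "f = foldr (\<circ>) rs id"
    using assms(1) by (rule abs_len_obtain)
  obtain qs where qs: "length qs = abs_len d n g" "set qs \<subseteq> reflections d n" "g = foldr (\<circ>) qs id"
    using assms(2) by (rule abs_len_obtain)
  have "abs_len d n (f \<circ> g) \<le> length (rs @ qs)"
  proof (rule abs_len_le)
    show "set (rs @ qs) \<subseteq> reflections d n"
      using rs qs by simp
    show "f \<circ> g = foldr (\<circ>) (rs @ qs) id"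
      by (simp only: rs(3) qs(3) foldr_comp_append)
  qed
  with rs qs show ?thesis by simp
qed

lemma abs_len_pos: "refl_product d n w \<Longrightarrow> w \<noteq> id \<Longrightarrow> 0 < abs_len d n w"
  by (erule abs_len_obtain) auto

lemma dim_le_abs_len:
  assumes "refl_product d n w" and "0 < d"
    and "\<And>v. coloured_lift d v \<circ> w = coloured_lift d v \<Longrightarrow> \<forall>k\<in>{1..n}. v k = 0"
  shows "n \<le> abs_len d n w"
proof (rule ccontr)
  assume "\<not> n \<le> abs_len d n w"
  moreover obtain rs where "length rs = abs_len d n w" "set rs \<subseteq> reflections d n" "w = foldr (\<circ>) rs id"
    using assms(1) by (rule abs_len_obtain)
  ultimately show False
    using few_reflections_fix_nonzero_lift [OF assms(2), of rs n] assms(3) by force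
qed

section \<open>The elements \<gamma> and [1]_s [a]_(d-s)\<close>

definition coloured_transp :: "nat \<Rightarrow> nat \<Rightarrow> nat \<Rightarrow> nat \<Rightarrow> nat \<Rightarrow> nat \<times> nat \<Rightarrow> nat \<times> nat" where
  "coloured_transp d n i j c =
    monomial d n (Transposition.transpose i j) (\<lambda>k. if k = i then c else if k = j then d - c else 0)"

lemma coloured_transp_reflection:
  assumes "0 < d" and "c \<le> d" and "i \<noteq> j" and "i \<in> {1..n}" and "j \<in> {1..n}"
  shows "coloured_transp d n i j c \<in> reflections d n"
proof -
  have \<tau>: "Transposition.transpose i j permutes {1..n}"
    using assms(4,5) by (rule permutes_swap_id)
  have "(\<Sum>k\<in>{1..n}. if k = i then c else if k = j then d - c else 0) =
      (\<Sum>k\<in>{1..n}. (if k = i then c else 0) + (if k = j then d - c else 0))"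
    by (rule sum.cong) (use assms in auto)
  then have "coloured_transp d n i j c \<in> Gddn d n"
    unfolding coloured_transp_def using assms
    by (intro monomial_in_Gddn \<tau>) (simp_all add: sum.distrib)
  moreover have "coloured_transp d n i j c (i, 0) \<noteq> (i, 0)"
    using assms by (simp add: coloured_transp_def monomial_def)
  then have "coloured_transp d n i j c \<noteq> id"
    by auto
  moreover define \<alpha> where "\<alpha> k = (if k = i then zeta d ^ c else if k = j then -1 else 0)" for k
  have "\<exists>k\<in>{1..n}. \<alpha> k \<noteq> 0"
    using assms by (auto simp: \<alpha>_def)
  moreover have "\<forall>m\<in>{1..n}. mat_act d n (coloured_transp d n i j c) v m = v m"
    if "(\<Sum>k\<in>{1..n}. \<alpha> k * v k) = 0" for v
  proof -
    have "(\<Sum>k\<in>{1..n}. \<alpha> k * v k) =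
        (\<Sum>k\<in>{1..n}. (if k = i then zeta d ^ c * v i else 0) + (if k = j then - v j else 0))"
      by (rule sum.cong) (use assms in \<open>auto simp: \<alpha>_def\<close>)
    with that assms have vj: "v j = zeta d ^ c * v i"
      by (simp add: sum.distrib)
    have "zeta d ^ (d - c) * zeta d ^ c = 1"
      using assms by (simp add: power_add [symmetric] zeta_pow_eq_1_iff)
    then show ?thesis
      unfolding coloured_transp_def mat_act_monomial_fixes_iff [OF assms(1) \<tau>]
      using vj assms by (auto simp: mult.assoc [symmetric])
  qed
  ultimately show ?thesis
    unfolding reflections_def is_reflection_def by blast
qed

lemma cycle_of_list_nth:
  assumes "distinct cs" and "i < length cs"
  shows "cycle_of_list cs (cs ! i) = cs ! (Suc i mod length cs)"
proof -
  have "cycle_of_list cs (cs ! i) = map (cycle_of_list cs ^^ 1) cs ! i"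
    using assms(2) by simp
  also have "\<dots> = rotate 1 cs ! i"
    by (simp only: cyclic_rotation [OF assms(1)])
  also have "\<dots> = cs ! (Suc i mod length cs)"
    using nth_rotate [OF assms(2), of 1] by simp
  finally show ?thesis .
qed

lemma cycle_upt_permutes: "cycle_of_list [1..<n] permutes {1..n}"
  using cycle_permutes [of "[1..<n]"] by (rule permutes_subset) auto

lemma monomial_cycle_refl_product:
  assumes "0 < d" and "distinct cs" and "set cs \<subseteq> {1..n}"
  shows "\<exists>rs. length rs = length cs - 1 \<and> set rs \<subseteq> reflections d n \<and>
    monomial d n (cycle_of_list cs) (\<lambda>_. 0) = foldr (\<circ>) rs id"
  using assms(2,3)
proof (induction cs rule: cycle_of_list.induct)
  case (1 i j cs)
  have "\<exists>rs. length rs = length (j # cs) - 1 \<and> set rs \<subseteq> reflections d n \<and>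
      monomial d n (cycle_of_list (j # cs)) (\<lambda>_. 0) = foldr (\<circ>) rs id"
    using "1.prems" by (intro "1.IH") auto
  then obtain rs where rs: "length rs = length cs" "set rs \<subseteq> reflections d n"
      "monomial d n (cycle_of_list (j # cs)) (\<lambda>_. 0) = foldr (\<circ>) rs id"
    by auto
  have "cycle_of_list (j # cs) permutes {1..n}"
    using cycle_permutes [of "j # cs"] by (rule permutes_subset) (use "1.prems"(2) in auto)
  then have "monomial d n (cycle_of_list (i # j # cs)) (\<lambda>_. 0) =
      monomial d n (Transposition.transpose i j) (\<lambda>_. 0) \<circ> monomial d n (cycle_of_list (j # cs)) (\<lambda>_. 0)"
    by (simp add: monomial_comp)
  also have "monomial d n (Transposition.transpose i j) (\<lambda>_. 0) = coloured_transp d n i j 0"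
    unfolding coloured_transp_def by (rule monomial_cong) auto
  also have "coloured_transp d n i j 0 \<circ> monomial d n (cycle_of_list (j # cs)) (\<lambda>_. 0) =
      foldr (\<circ>) (coloured_transp d n i j 0 # rs) id"
    by (simp add: rs(3))
  finally have eq: "monomial d n (cycle_of_list (i # j # cs)) (\<lambda>_. 0) =
      foldr (\<circ>) (coloured_transp d n i j 0 # rs) id" .
  have "coloured_transp d n i j 0 \<in> reflections d n"
    using "1.prems" assms(1) by (intro coloured_transp_reflection) auto
  then have "set (coloured_transp d n i j 0 # rs) \<subseteq> reflections d n"
    using rs(2) by simp
  moreover have "length (coloured_transp d n i j 0 # rs) = length (i # j # cs) - 1"
    using rs(1) by simp
  ultimately show ?case
    using eq by blast
qed (auto intro: exI [of _ "[]"])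

lemma bcyc_monomial:
  assumes "distinct ks" and "ks \<noteq> []" and "set ks \<subseteq> {1..n}"
  shows "bcyc d s (map (\<lambda>k. (k, 0)) ks) = monomial d n (cycle_of_list ks) (\<lambda>k. if k = last ks then s else 0)"
proof (rule ext, clarify)
  fix k t
  show "bcyc d s (map (\<lambda>k. (k, 0)) ks) (k, t) =
      monomial d n (cycle_of_list ks) (\<lambda>k. if k = last ks then s else 0) (k, t)"
  proof (cases "t < d \<and> k \<in> set ks")
    case True
    then obtain i where i: "i < length ks" "ks ! i = k"
      by (auto simp: in_set_conv_nth)
    have least: "(LEAST i'. i' < length ks \<and> fst (map (\<lambda>k. (k, 0::nat)) ks ! i') = k) = i"
      by (rule Least_equality) (use assms(1) i in \<open>auto simp: nth_eq_iff_index_eq\<close>)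
    have last: "k = last ks \<longleftrightarrow> Suc i = length ks"
      using assms(1,2) i by (auto simp: last_conv_nth nth_eq_iff_index_eq)
    have "nat ((int t + int s) mod int d) = (t + s) mod d"
      by (metis nat_int of_nat_add zmod_int)
    moreover have "0 < length ks"
      using i(1) by linarith
    then have "Suc i mod length ks < length ks"
      by simp
    then have "map (\<lambda>k. (k, 0::nat)) ks ! (Suc i mod length ks) = (ks ! (Suc i mod length ks), 0)"
      by simp
    ultimately show ?thesis
      using True i least last assms(3)
      using cycle_of_list_nth [OF assms(1) i(1)]
      by (auto simp: bcyc_def monomial_def Let_def)
  next
    case False
    then show ?thesis
      using assms(2,3) last_in_set [OF assms(2)] by (auto simp: bcyc_def monomial_def id_outside_supp)
  qed
qed

definition twist_colour :: "nat \<Rightarrow> nat \<Rightarrow> nat \<Rightarrow> nat \<Rightarrow> nat" where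
  "twist_colour d a s k = (if k = 1 then s else if k = a then d - s else 0)"

definition twist :: "nat \<Rightarrow> nat \<Rightarrow> nat \<Rightarrow> nat \<Rightarrow> nat \<times> nat \<Rightarrow> nat \<times> nat" where
  "twist d n a s = monomial d n id (twist_colour d a s)"

lemma balanced_pair_eq_twist:
  assumes "1 < a" and "a \<le> n"
  shows "bcyc d s [(1, 0)] \<circ> bcyc d (d - s) [(a, 0)] = twist d n a s"
proof -
  have "bcyc d t [(b, 0)] = monomial d n id (\<lambda>k. if k = b then t else 0)" if "b \<in> {1..n}" for b t
    using bcyc_monomial [of "[b]" n d t] that by simp
  then have "bcyc d s [(1, 0)] \<circ> bcyc d (d - s) [(a, 0)] =
      monomial d n id (\<lambda>k. (if k = a then d - s else 0) + (if k = 1 then s else 0))"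
    using assms by (simp add: monomial_comp)
  also have "\<dots> = twist d n a s"
    unfolding twist_def by (rule monomial_cong) (use assms in \<open>auto simp: twist_colour_def\<close>)
  finally show ?thesis .
qed

lemma twist_eq_transp_comp:
  assumes "a \<in> {1..n}" and "a \<noteq> 1"
  shows "twist d n a s = coloured_transp d n 1 a 0 \<circ> coloured_transp d n 1 a s"
proof -
  have \<tau>: "Transposition.transpose 1 a permutes {1..n}"
    using assms(1) by (intro permutes_swap_id) auto
  show ?thesis
    unfolding twist_def coloured_transp_def monomial_comp [OF \<tau>]
    by (rule monomial_cong)
      (use assms(2) in \<open>auto simp: twist_colour_def Transposition.transpose_def\<close>)
qed

lemma twist_comp_inverse:
  assumes "a \<noteq> 1" and "s \<le> d"
  shows "twist d n a s \<circ> twist d n a (d - s) = id"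
proof -
  have "twist d n a s \<circ> twist d n a (d - s) =
      monomial d n id (\<lambda>k. twist_colour d a (d - s) k + twist_colour d a s k)"
    unfolding twist_def by (simp add: monomial_comp)
  also have "\<dots> = monomial d n id (\<lambda>_. 0)"
    by (rule monomial_cong) (use assms in \<open>auto simp: twist_colour_def\<close>)
  finally show ?thesis by simp
qed

lemma inv_twist:
  assumes "a \<noteq> 1" and "s \<le> d"
  shows "inv (twist d n a s) = twist d n a (d - s)"
proof (rule inv_unique_comp)
  show "twist d n a s \<circ> twist d n a (d - s) = id"
    using assms by (rule twist_comp_inverse)
  show "twist d n a (d - s) \<circ> twist d n a s = id"
    using twist_comp_inverse [of a "d - s" d n] assms by simp
qed

lemma twist_refl_product:
  assumes "0 < d" and "a \<in> {1..n}" and "a \<noteq> 1" and "s \<le> d"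
  shows "refl_product d n (twist d n a s)" and "abs_len d n (twist d n a s) \<le> 2"
proof -
  let ?rs = "[coloured_transp d n 1 a 0, coloured_transp d n 1 a s]"
  have rs: "set ?rs \<subseteq> reflections d n"
    using assms by (auto intro!: coloured_transp_reflection)
  have tw: "twist d n a s = foldr (\<circ>) ?rs id"
    using twist_eq_transp_comp [OF assms(2,3)] by simp
  show "refl_product d n (twist d n a s)"
    unfolding refl_product_def using rs tw by blast
  show "abs_len d n (twist d n a s) \<le> 2"
    using abs_len_le [OF rs tw] by simp
qed

definition plain_cycle :: "nat \<Rightarrow> nat \<Rightarrow> nat \<times> nat \<Rightarrow> nat \<times> nat" where
  "plain_cycle d n = monomial d n (cycle_of_list [1..<n]) (\<lambda>_. 0)"

lemma plain_cycle_refl_product: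
  assumes "0 < d"
  shows "refl_product d n (plain_cycle d n)" and "abs_len d n (plain_cycle d n) \<le> n - 2"
proof -
  have "set [1..<n] \<subseteq> {1..n}"
    by auto
  then obtain rs where len: "length rs = length [1..<n] - 1" and rs: "set rs \<subseteq> reflections d n"
    and pc: "plain_cycle d n = foldr (\<circ>) rs id"
    using monomial_cycle_refl_product [OF assms distinct_upt] unfolding plain_cycle_def by blast
  show "refl_product d n (plain_cycle d n)"
    unfolding refl_product_def using rs pc by blast
  show "abs_len d n (plain_cycle d n) \<le> n - 2"
    using abs_len_le [OF rs pc] len by simp
qed

lemma gamma_eq_twist_comp_plain_cycle:
  assumes "2 \<le> n"
  shows "bcyc d 1 (map (\<lambda>k. (k, 0)) [1..<n]) \<circ> bcyc d (d - 1) [(n, 0)] = twist d n n 1 \<circ> plain_cycle d n"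
proof -
  let ?\<rho> = "cycle_of_list [1..<n]"
  obtain m where n: "n = m + 2"
    using le_Suc_ex [OF assms] by auto
  have len: "length [1..<n] = Suc m" and "1 + m < n" and "n - 1 = 1 + m"
    using n by simp_all
  have "?\<rho> ([1..<n] ! m) = [1..<n] ! (Suc m mod length [1..<n])"
    by (rule cycle_of_list_nth) (use \<open>1 + m < n\<close> in \<open>simp_all add: len\<close>)
  with \<open>1 + m < n\<close> \<open>n - 1 = 1 + m\<close> len have \<rho>_last: "?\<rho> (n - 1) = 1"
    by simp
  have \<rho>_eq_1: "?\<rho> k = 1 \<longleftrightarrow> k = n - 1" for k
    using permutes_inj [OF cycle_upt_permutes, of n] \<rho>_last by (metis injD)
  have \<rho>_eq_n: "?\<rho> k = n \<longleftrightarrow> k = n" if "k \<in> {1..n}" for k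
    using permutes_in_image [OF cycle_permutes [of "[1..<n]"], of k] that by (auto simp: id_outside_supp)
  have "bcyc d 1 (map (\<lambda>k. (k, 0)) [1..<n]) \<circ> bcyc d (d - 1) [(n, 0)] =
      monomial d n ?\<rho> (\<lambda>k. if k = n - 1 then 1 else 0) \<circ> monomial d n id (\<lambda>k. if k = n then d - 1 else 0)"
  proof -
    have sub: "set [1..<n] \<subseteq> {1..n}"
      by auto
    have "bcyc d 1 (map (\<lambda>k. (k, 0)) [1..<n]) = monomial d n ?\<rho> (\<lambda>k. if k = n - 1 then 1 else 0)"
      using bcyc_monomial [OF distinct_upt _ sub, of d 1] assms by simp
    moreover have "bcyc d (d - 1) [(n, 0)] = monomial d n id (\<lambda>k. if k = n then d - 1 else 0)"
      using bcyc_monomial [of "[n]" n d "d - 1"] assms by simp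
    ultimately show ?thesis
      by simp
  qed
  also have "\<dots> = monomial d n ?\<rho> (\<lambda>k. (if k = n then d - 1 else 0) + (if k = n - 1 then 1 else 0))"
    by (simp add: monomial_comp)
  also have "\<dots> = twist d n n 1 \<circ> plain_cycle d n"
    unfolding twist_def plain_cycle_def monomial_comp [OF cycle_upt_permutes]
  proof (rule monomial_cong)
    fix k assume k: "k \<in> {1..n}"
    show "((if k = n then d - 1 else 0) + (if k = n - 1 then 1 else 0)) mod d =
        (0 + twist_colour d n 1 (?\<rho> k)) mod d"
      using assms \<rho>_eq_1 [of k] \<rho>_eq_n [OF k] by (auto simp: twist_colour_def)
  qed simp
  finally show ?thesis .
qed

lemma cycle_invariant_vanishes:
  fixes v :: "'a \<Rightarrow> 'b::idom"
  assumes "distinct cs" and "cs \<noteq> []"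
    and step: "\<And>k. k \<in> set cs \<Longrightarrow> v (cycle_of_list cs k) = z k * v k"
    and "(\<Prod>k\<in>set cs. z k) \<noteq> 1"
    and "k \<in> set cs"
  shows "v k = 0"
proof -
  obtain m where m: "length cs = Suc m"
    using assms(2) by (cases cs) auto
  have along: "v (cs ! i) = (\<Prod>j<i. z (cs ! j)) * v (cs ! 0)" if "i \<le> m" for i
    using that
  proof (induction i)
    case (Suc i)
    then have "v (cs ! Suc i) = v (cycle_of_list cs (cs ! i))"
      using cycle_of_list_nth [OF assms(1), of i] m by simp
    also have "\<dots> = z (cs ! i) * v (cs ! i)"
      using step [of "cs ! i"] Suc.prems m by simp
    finally show ?case
      using Suc by (simp add: mult_ac)
  qed simp
  have "v (cs ! 0) = v (cycle_of_list cs (cs ! m))"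
    using cycle_of_list_nth [OF assms(1), of m] m by simp
  also have "\<dots> = z (cs ! m) * v (cs ! m)"
    using step [of "cs ! m"] m by simp
  also have "\<dots> = (\<Prod>j<length cs. z (cs ! j)) * v (cs ! 0)"
    using along [of m] m by (simp add: mult_ac)
  also have "(\<Prod>j<length cs. z (cs ! j)) = (\<Prod>k\<in>set cs. z k)"
  proof -
    have "set cs = (!) cs ` {..<length cs}"
      by (auto simp: set_conv_nth)
    moreover have "inj_on ((!) cs) {..<length cs}"
      using assms(1) by (simp add: inj_on_nth)
    ultimately show ?thesis
      by (simp add: prod.reindex)
  qed
  finally have "v (cs ! 0) = 0"
    using assms(4) by simp
  moreover obtain i where "i < length cs" and "k = cs ! i"
    using assms(5) by (auto simp: in_set_conv_nth)
  ultimately show ?thesis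
    using along [of i] m by simp
qed

lemma twisted_plain_cycle_no_invariant_lift:
  assumes "0 < d" and "2 \<le> n" and "\<not> d dvd (\<Sum>k\<in>{1..<n}. c k)" and "\<not> d dvd c n"
    and "coloured_lift d v \<circ> (monomial d n id c \<circ> plain_cycle d n) = coloured_lift d v"
  shows "\<forall>k\<in>{1..n}. v k = 0"
proof -
  let ?\<rho> = "cycle_of_list [1..<n]"
  have fixed: "v (?\<rho> k) = zeta d ^ c (?\<rho> k) * v k" if "k \<in> {1..n}" for k
    using assms(5) that
    unfolding plain_cycle_def monomial_comp [OF cycle_upt_permutes] lift_invariant_monomial_iff [OF assms(1)]
    by simp
  have "v n = zeta d ^ c n * v n"
    using fixed [of n] assms(2) by (simp add: id_outside_supp)
  then have "v n = 0"
    using assms(4) zeta_pow_eq_1_iff [OF assms(1)] by auto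
  moreover have "v k = 0" if "k \<in> {1..<n}" for k
  proof (rule cycle_invariant_vanishes [where z = "\<lambda>k. zeta d ^ c (?\<rho> k)"])
    show "distinct [1..<n]" and "[1..<n] \<noteq> []" and "k \<in> set [1..<n]"
      using assms(2) that by simp_all
    show "v (?\<rho> k') = zeta d ^ c (?\<rho> k') * v k'" if "k' \<in> set [1..<n]" for k'
      using fixed that by simp
    have "(\<Prod>k\<in>set [1..<n]. zeta d ^ c (?\<rho> k)) = zeta d ^ (\<Sum>k\<in>{1..<n}. c (?\<rho> k))"
      by (simp add: power_sum)
    also have "(\<Sum>k\<in>{1..<n}. c (?\<rho> k)) = (\<Sum>k\<in>{1..<n}. c k)"
      using sum.permute [OF cycle_permutes [of "[1..<n]"], of c] by (simp add: comp_def)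
    finally show "(\<Prod>k\<in>set [1..<n]. zeta d ^ c (?\<rho> k)) \<noteq> 1"
      using assms(3) zeta_pow_eq_1_iff [OF assms(1)] by simp
  qed
  ultimately show ?thesis
    by (metis atLeastAtMost_iff atLeastLessThan_iff le_neq_implies_less)
qed

lemma sum_twist_colour:
  assumes "1 < a" and "a \<le> n"
  shows "(\<Sum>k\<in>{1..<n}. twist_colour d a s k) = s + (if a < n then d - s else 0)"
proof -
  have "(\<Sum>k\<in>{1..<n}. twist_colour d a s k) =
      (\<Sum>k\<in>{1..<n}. (if k = 1 then s else 0) + (if k = a then d - s else 0))"
    by (rule sum.cong) (use assms in \<open>auto simp: twist_colour_def\<close>)
  also have "\<dots> = s + (if a < n then d - s else 0)"
    using assms by (simp add: sum.distrib)
  finally show ?thesis .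
qed

lemma abs_len_gamma:
  assumes "2 \<le> d" and "2 \<le> n"
  shows "refl_product d n (twist d n n 1 \<circ> plain_cycle d n)"
    and "abs_len d n (twist d n n 1 \<circ> plain_cycle d n) = n"
    and "abs_len d n (twist d n n 1 \<circ> plain_cycle d n) =
      abs_len d n (twist d n n 1) + abs_len d n (plain_cycle d n)"
proof -
  have d: "0 < d" and n: "n \<in> {1..n}" "n \<noteq> 1"
    using assms by auto
  note tw = twist_refl_product [OF d n, of 1] and pc = plain_cycle_refl_product [OF d, of n]
  show \<gamma>: "refl_product d n (twist d n n 1 \<circ> plain_cycle d n)"
    using tw(1) pc(1) assms by (intro refl_product_comp) auto
  have "abs_len d n (twist d n n 1 \<circ> plain_cycle d n) \<le> abs_len d n (twist d n n 1) + abs_len d n (plain_cycle d n)"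
    using tw(1) pc(1) assms by (intro abs_len_comp_le) auto
  moreover have "n \<le> abs_len d n (twist d n n 1 \<circ> plain_cycle d n)"
  proof (rule dim_le_abs_len [OF \<gamma> d])
    fix v assume "coloured_lift d v \<circ> (twist d n n 1 \<circ> plain_cycle d n) = coloured_lift d v"
    moreover have "\<not> d dvd (\<Sum>k\<in>{1..<n}. twist_colour d n 1 k)" and "\<not> d dvd twist_colour d n 1 n"
      using assms sum_twist_colour [of n n d 1] nat_dvd_not_less [of "d - 1" d]
      by (auto simp: twist_colour_def)
    ultimately show "\<forall>k\<in>{1..n}. v k = 0"
      unfolding twist_def using d assms(2) by (intro twisted_plain_cycle_no_invariant_lift) auto
  qed
  ultimately show "abs_len d n (twist d n n 1 \<circ> plain_cycle d n) = n"
    and "abs_len d n (twist d n n 1 \<circ> plain_cycle d n) =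
      abs_len d n (twist d n n 1) + abs_len d n (plain_cycle d n)"
    using tw(2) pc(2) assms by linarith+
qed

lemma dim_le_abs_len_inv_twist_comp_gamma:
  assumes "2 \<le> d" and "2 \<le> n" and "1 < a" and "a \<le> n" and "1 \<le> s" and "s \<le> d - 1"
    and "\<not> (a = n \<and> s = 1)"
  shows "n \<le> abs_len d n (twist d n a (d - s) \<circ> (twist d n n 1 \<circ> plain_cycle d n))"
proof -
  let ?c = "\<lambda>k. twist_colour d n 1 k + twist_colour d a (d - s) k"
  have d: "0 < d" and a: "a \<in> {1..n}" "a \<noteq> 1"
    using assms by auto
  have w: "twist d n a (d - s) \<circ> (twist d n n 1 \<circ> plain_cycle d n) = monomial d n id ?c \<circ> plain_cycle d n"
    unfolding twist_def by (simp add: o_assoc monomial_comp)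
  have sum: "(\<Sum>k\<in>{1..<n}. ?c k) = 1 + (d - s) + (if a < n then s else 0)"
    using sum_twist_colour [of n n d 1] sum_twist_colour [OF assms(3,4), of d "d - s"] assms
    by (simp add: sum.distrib)
  have sum_ndvd: "\<not> d dvd (\<Sum>k\<in>{1..<n}. ?c k)"
  proof (cases "a < n")
    case True
    have "Suc d mod d = 1"
      using assms(1) by (simp add: mod_Suc)
    with True sum assms(6) show ?thesis
      by (simp add: dvd_eq_mod_eq_0)
  next
    case False
    with sum assms(4,7) have "s \<noteq> 1" and "(\<Sum>k\<in>{1..<n}. ?c k) = 1 + (d - s)"
      by auto
    with assms(5,6) nat_dvd_not_less [of "1 + (d - s)" d] show ?thesis
      by simp
  qed
  have c_n: "?c n = d - 1 + (if a = n then s else 0)"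
    using assms by (simp add: twist_colour_def)
  have n_ndvd: "\<not> d dvd ?c n"
  proof (cases "a = n")
    case True
    with c_n assms have "s \<noteq> 1" and c_n': "?c n = d + (s - 1)"
      by auto
    with assms(5,6) nat_dvd_not_less [of "s - 1" d] have "\<not> d dvd (s - 1)"
      by simp
    then show ?thesis
      unfolding c_n' dvd_add_triv_left_iff .
  next
    case False
    with c_n assms(1) nat_dvd_not_less [of "d - 1" d] show ?thesis
      by simp
  qed
  have "refl_product d n (twist d n a (d - s) \<circ> (twist d n n 1 \<circ> plain_cycle d n))"
    using twist_refl_product(1) [OF d a diff_le_self] abs_len_gamma(1) [OF assms(1,2)]
    by (rule refl_product_comp)
  then show ?thesis
  proof (rule dim_le_abs_len [OF _ d])
    fix v assume "coloured_lift d v \<circ> (twist d n a (d - s) \<circ> (twist d n n 1 \<circ> plain_cycle d n)) =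
      coloured_lift d v"
    then show "\<forall>k\<in>{1..n}. v k = 0"
      unfolding w by (rule twisted_plain_cycle_no_invariant_lift [OF d assms(2) sum_ndvd n_ndvd])
  qed
qed

lemma twist_ne_id:
  assumes "0 < s" and "s < d" and "1 \<le> n"
  shows "twist d n a s \<noteq> id"
proof -
  have "twist d n a s (1, 0) = (1, s)"
    using assms by (simp add: twist_def monomial_def twist_colour_def)
  with assms(1) show ?thesis
    by (metis id_apply prod.inject less_irrefl)
qed

lemma abs_len_gamma_lt:
  assumes "2 \<le> d" and "2 \<le> n" and "1 < a" and "a \<le> n" and "1 \<le> s" and "s \<le> d - 1"
    and "\<not> (a = n \<and> s = 1)"
  shows "abs_len d n (twist d n n 1 \<circ> plain_cycle d n) <
    abs_len d n (twist d n a s) + abs_len d n (twist d n a (d - s) \<circ> (twist d n n 1 \<circ> plain_cycle d n))"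
proof -
  have "refl_product d n (twist d n a s)"
    using assms by (intro twist_refl_product) auto
  moreover have "twist d n a s \<noteq> id"
    using assms by (intro twist_ne_id) auto
  ultimately have "0 < abs_len d n (twist d n a s)"
    by (rule abs_len_pos)
  then show ?thesis
    using abs_len_gamma(2) [OF assms(1,2)] dim_le_abs_len_inv_twist_comp_gamma [OF assms] by linarith
qed

theorem lemmaA2:
  fixes d n a s :: nat
  assumes "d \<ge> 2" and "n \<ge> 2" and "1 < a" and "a \<le> n" and "1 \<le> s" and "s \<le> d - 1"
  shows "abs_le d n (bcyc d s [(1, 0)] \<circ> bcyc d (d - s) [(a, 0)])
           (bcyc d 1 (map (\<lambda>k. (k, 0)) [1..<n]) \<circ> bcyc d (d - 1) [(n, 0)])
         \<longleftrightarrow> (a = n \<and> s = 1)"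
proof -
  let ?\<gamma> = "twist d n n 1 \<circ> plain_cycle d n"
  have a: "a \<noteq> 1" and s: "s \<le> d"
    using assms by auto
  have "abs_le d n (bcyc d s [(1, 0)] \<circ> bcyc d (d - s) [(a, 0)])
      (bcyc d 1 (map (\<lambda>k. (k, 0)) [1..<n]) \<circ> bcyc d (d - 1) [(n, 0)]) \<longleftrightarrow>
    abs_len d n ?\<gamma> = abs_len d n (twist d n a s) + abs_len d n (twist d n a (d - s) \<circ> ?\<gamma>)"
    unfolding abs_le_def balanced_pair_eq_twist [OF assms(3,4)]
      gamma_eq_twist_comp_plain_cycle [OF assms(2)] inv_twist [OF a s] ..
  also have "\<dots> \<longleftrightarrow> a = n \<and> s = 1"
  proof (cases "a = n \<and> s = 1")
    case True
    moreover have "twist d n n (d - 1) \<circ> ?\<gamma> = plain_cycle d n"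
      using twist_comp_inverse [of n "d - 1" d n] assms(1,2) by (simp add: o_assoc)
    ultimately show ?thesis
      using abs_len_gamma(3) [OF assms(1,2)] by simp
  next
    case False
    then show ?thesis
      using abs_len_gamma_lt [OF assms False] by simp
  qed
  finally show ?thesis .
qed

end
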